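(* Let $\alpha\in[1,2)$, let $X_k(m)$ be the triangular array of the context and $d_k:=4^{k^2}$. Define the $D[0,1]$-valued process $\mathbb W_n^{(\mathbf M)}(X)(t):=n^{-1/\alpha}\sum_{\frac1{2\alpha}\log n<k\le\frac1\alpha\log n}\sum_{j=1}^{\lfloor nt\rfloor}\big(X_k(j)-X_k(j+d_k)\big)$, $t\in[0,1]$. Then $\mathbb W_n^{(\mathbf M)}(X)$ converges in distribution in $(D[0,1],J_1)$ to an $S_\alpha\big((2\ln2)^{1/\alpha},0,0\big)$ Lévy motion.
   Context: $\log$ is base $2$. $S_\alpha(\sigma,\beta,\mu)$ denotes the stable law with characteristic function $\exp\{-\sigma^\alpha|\theta|^\alpha(1-i\beta\,\mathrm{sign}(\theta)\tan(\pi\alpha/2))+i\mu\theta\}$ ($\alpha\neq1$), resp. $\exp\{-\sigma|\theta|(1+i\beta\frac2\pi\mathrm{sign}(\theta)\ln|\theta|)+i\mu\theta\}$ ($\alpha=1$). An $S_\alpha(\sigma,\beta,0)$ Lévy motion is a process on $[0,1]$ with càdlàg paths, $\mathbb W_0=0$, independent increments and $\mathbb W_t-\mathbb W_s\sim S_\alpha(\sigma(t-s)^{1/\alpha},\beta,0)$ for $s<t$. Triangular array: on $(\Omega,\mathcal F,\mathbb P)$ let $\{X_k(m):k,m\in\mathbb N\}$ be independent with $X_k(m)\sim S_\alpha(k^{-1/\alpha},1,0)$. *)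

theory Defs
  imports "HOL-Probability.Probability"
begin

definition stable_cf :: "real \<Rightarrow> real \<Rightarrow> real \<Rightarrow> real \<Rightarrow> real \<Rightarrow> complex" where
  "stable_cf \<alpha> \<sigma> \<beta> \<mu> \<theta> =
     (if \<alpha> \<noteq> 1 then
        exp (- complex_of_real (\<sigma> powr \<alpha> * \<bar>\<theta>\<bar> powr \<alpha>)
               * (1 - \<i> * complex_of_real (\<beta> * sgn \<theta> * tan (pi * \<alpha> / 2)))
             + \<i> * complex_of_real (\<mu> * \<theta>))
      else
        exp (- complex_of_real (\<sigma> * \<bar>\<theta>\<bar>)
               * (1 + \<i> * complex_of_real (\<beta> * (2 / pi) * sgn \<theta> * ln \<bar>\<theta>\<bar>))
             + \<i> * complex_of_real (\<mu> * \<theta>)))"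

definition has_stable_law :: "'a measure \<Rightarrow> ('a \<Rightarrow> real) \<Rightarrow> real \<Rightarrow> real \<Rightarrow> real \<Rightarrow> real \<Rightarrow> bool" where
  "has_stable_law M Y \<alpha> \<sigma> \<beta> \<mu> \<longleftrightarrow>
     Y \<in> borel_measurable M \<and>
     (\<forall>\<theta>. char (distr M borel Y) \<theta> = stable_cf \<alpha> \<sigma> \<beta> \<mu> \<theta>)"

text \<open>Cadlag paths on [0,1] (values outside [0,1] are irrelevant).\<close>
definition cadlag01 :: "(real \<Rightarrow> real) \<Rightarrow> bool" where
  "cadlag01 x \<longleftrightarrow>
     (\<forall>t\<in>{0..<1}. (x \<longlongrightarrow> x t) (at_right t)) \<and>
     (\<forall>t\<in>{0<..1}. \<exists>l. (x \<longlongrightarrow> l) (at_left t))"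

definition time_changes01 :: "(real \<Rightarrow> real) set" where
  "time_changes01 = {r. strict_mono_on {0..1} r \<and> continuous_on {0..1} r \<and> r 0 = 0 \<and> r 1 = 1}"

definition skorokhod_J1 :: "(real \<Rightarrow> real) \<Rightarrow> (real \<Rightarrow> real) \<Rightarrow> real" where
  "skorokhod_J1 x y =
     Inf {e. \<exists>r\<in>time_changes01. (\<forall>t\<in>{0..1}. \<bar>r t - t\<bar> \<le> e) \<and>
                                 (\<forall>t\<in>{0..1}. \<bar>x t - y (r t)\<bar> \<le> e)}"

definition bdd_J1_continuous :: "((real \<Rightarrow> real) \<Rightarrow> real) \<Rightarrow> bool" where
  "bdd_J1_continuous f \<longleftrightarrow>
     (\<exists>B. \<forall>x. cadlag01 x \<longrightarrow> \<bar>f x\<bar> \<le> B) \<and>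
     (\<forall>x. cadlag01 x \<longrightarrow> (\<forall>e>0. \<exists>d>0. \<forall>y. cadlag01 y \<longrightarrow> skorokhod_J1 x y < d \<longrightarrow> \<bar>f y - f x\<bar> < e))"

definition converges_in_dist_J1 ::
  "'a measure \<Rightarrow> (nat \<Rightarrow> 'a \<Rightarrow> real \<Rightarrow> real) \<Rightarrow> 'b measure \<Rightarrow> ('b \<Rightarrow> real \<Rightarrow> real) \<Rightarrow> bool" where
  "converges_in_dist_J1 M Z N W \<longleftrightarrow>
     (\<forall>f. bdd_J1_continuous f \<longrightarrow>
        (\<forall>n. (\<lambda>\<omega>. f (Z n \<omega>)) \<in> borel_measurable M) \<and>
        (\<lambda>\<omega>. f (W \<omega>)) \<in> borel_measurable N \<and>
        (\<lambda>n. \<integral>\<omega>. f (Z n \<omega>) \<partial>M) \<longlonglongrightarrow> (\<integral>\<omega>. f (W \<omega>) \<partial>N))"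

definition levy_motion :: "'b measure \<Rightarrow> ('b \<Rightarrow> real \<Rightarrow> real) \<Rightarrow> real \<Rightarrow> real \<Rightarrow> real \<Rightarrow> bool" where
  "levy_motion N W \<alpha> \<sigma> \<beta> \<longleftrightarrow>
     prob_space N \<and>
     (\<forall>t\<in>{0..1}. (\<lambda>\<omega>. W \<omega> t) \<in> borel_measurable N) \<and>
     (\<forall>\<omega>\<in>space N. cadlag01 (W \<omega>) \<and> W \<omega> 0 = 0) \<and>
     (\<forall>(n::nat) (ts::nat \<Rightarrow> real). 0 \<le> ts 0 \<longrightarrow> ts n \<le> 1 \<longrightarrow> strict_mono_on {0..n} ts \<longrightarrow>
        prob_space.indep_vars N (\<lambda>_. borel) (\<lambda>i \<omega>. W \<omega> (ts i) - W \<omega> (ts (i - 1))) {1..n}) \<and>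
     (\<forall>s t. 0 \<le> s \<longrightarrow> s < t \<longrightarrow> t \<le> 1 \<longrightarrow>
        has_stable_law N (\<lambda>\<omega>. W \<omega> t - W \<omega> s) \<alpha> (\<sigma> * (t - s) powr (1 / \<alpha>)) \<beta> 0)"

definition triangular_array :: "'a measure \<Rightarrow> (nat \<Rightarrow> nat \<Rightarrow> 'a \<Rightarrow> real) \<Rightarrow> real \<Rightarrow> bool" where
  "triangular_array M X \<alpha> \<longleftrightarrow>
     prob_space M \<and>
     prob_space.indep_vars M (\<lambda>_. borel) (\<lambda>(k, m). X k m) {(k, m). 1 \<le> k \<and> 1 \<le> m} \<and>
     (\<forall>k m. 1 \<le> k \<longrightarrow> 1 \<le> m \<longrightarrow> has_stable_law M (X k m) \<alpha> (real k powr (- 1 / \<alpha>)) 1 0)"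

definition WM :: "real \<Rightarrow> (nat \<Rightarrow> nat \<Rightarrow> 'a \<Rightarrow> real) \<Rightarrow> nat \<Rightarrow> 'a \<Rightarrow> real \<Rightarrow> real" where
  "WM \<alpha> X n \<omega> t =
     real n powr (- 1 / \<alpha>) *
     (\<Sum>k\<in>{k::nat. log 2 (real n) / (2 * \<alpha>) < real k \<and> real k \<le> log 2 (real n) / \<alpha>}.
        \<Sum>j=1..nat \<lfloor>real n * t\<rfloor>. X k j \<omega> - X k (j + 4 ^ (k^2)) \<omega>)"

end

theory Submission
  imports Defs "HOL-Analysis.Harmonic_Numbers" "HOL-Real_Asymp.Real_Asymp"
begin

text \<open>Once \<open>n \<ge> 256\<close>, every shift \<open>d\<^sub>k = 4^(k^2)\<close> of a scale \<open>k\<close> in the block exceeds \<open>n\<close>, so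
  the increments \<open>Y\<^sub>j = n^(-1/\<alpha>) \<Sum>\<^sub>k (X\<^sub>k(j) - X\<^sub>k(j + d\<^sub>k))\<close>, \<open>j = 1..n\<close>, of the process are built
  from disjoint parts of the array. They are therefore independent and symmetric \<open>\<alpha>\<close>-stable,
  with characteristic function \<open>exp (- H\<^sub>n |\<theta>|^\<alpha> / n)\<close> where \<open>H\<^sub>n = \<Sum>\<^sub>k 2/k\<close>. The grid increments
  \<open>W(j/n) - W((j-1)/n)\<close> of the Levy motion, scaled by \<open>c\<^sub>n = (H\<^sub>n / (2 ln 2))^(1/\<alpha>)\<close>, have the same
  joint law, so \<open>W\<^sub>n\<^sup>(\<^sup>M\<^sup>)\<close> has the law of the step path \<open>t \<mapsto> c\<^sub>n W(\<lfloor>nt\<rfloor>/n)\<close>. As \<open>H\<^sub>n\<close> is a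
  harmonic sum over \<open>(log n/(2\<alpha>), log n/\<alpha>]\<close>, \<open>c\<^sub>n \<longrightarrow> 1\<close>; and for every cadlag path the
  discretization \<open>c\<^sub>n x(\<lfloor>nt\<rfloor>/n)\<close> converges to \<open>x\<close> in J1 (via a time change moving the points of
  an oscillation partition of \<open>x\<close> to the grid). Dominated convergence concludes.\<close>

section \<open>The Skorokhod distance\<close>

lemma id_in_time_changes01: "(\<lambda>t. t) \<in> time_changes01"
  unfolding time_changes01_def by (auto simp: strict_mono_on_def intro: continuous_on_id)

lemma skorokhod_J1_le:
  assumes "r \<in> time_changes01" "\<forall>t\<in>{0..1}. \<bar>r t - t\<bar> \<le> e" "\<forall>t\<in>{0..1}. \<bar>x t - y (r t)\<bar> \<le> e"
  shows "skorokhod_J1 x y \<le> e"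
  unfolding skorokhod_J1_def
proof (rule cInf_lower)
  show "e \<in> {e. \<exists>r\<in>time_changes01. (\<forall>t\<in>{0..1}. \<bar>r t - t\<bar> \<le> e) \<and> (\<forall>t\<in>{0..1}. \<bar>x t - y (r t)\<bar> \<le> e)}"
    using assms by blast
  show "bdd_below {e. \<exists>r\<in>time_changes01. (\<forall>t\<in>{0..1}. \<bar>r t - t\<bar> \<le> e) \<and> (\<forall>t\<in>{0..1}. \<bar>x t - y (r t)\<bar> \<le> e)}"
    by (rule bdd_belowI[of _ 0]) force
qed

lemma skorokhod_J1_le_uniform:
  assumes "0 \<le> e" "\<forall>t\<in>{0..1}. \<bar>x t - y t\<bar> \<le> e"
  shows "skorokhod_J1 x y \<le> e"
  using skorokhod_J1_le[OF id_in_time_changes01] assms by auto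

lemma bdd_J1_continuous_tendsto:
  assumes f: "bdd_J1_continuous f" and x: "cadlag01 x" and ys: "\<And>i. cadlag01 (ys i)"
    and lim: "\<And>d. d > 0 \<Longrightarrow> eventually (\<lambda>i. skorokhod_J1 x (ys i) < d) F"
  shows "((\<lambda>i. f (ys i)) \<longlongrightarrow> f x) F"
  unfolding tendsto_iff
proof (intro allI impI)
  fix e :: real assume "e > 0"
  then obtain d where "d > 0" and d: "\<And>y. cadlag01 y \<Longrightarrow> skorokhod_J1 x y < d \<Longrightarrow> \<bar>f y - f x\<bar> < e"
    using f x unfolding bdd_J1_continuous_def by blast
  from lim[OF \<open>d > 0\<close>] show "eventually (\<lambda>i. dist (f (ys i)) (f x) < e) F"
    by eventually_elim (use d ys in \<open>simp add: dist_real_def\<close>)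
qed

lemma bdd_J1_continuous_cong:
  assumes f: "bdd_J1_continuous f" and x: "cadlag01 x" and y: "cadlag01 y"
    and eq: "\<And>t. t \<in> {0..1} \<Longrightarrow> x t = y t"
  shows "f x = f y"
proof -
  have "skorokhod_J1 x y \<le> 0" using eq by (intro skorokhod_J1_le_uniform) auto
  then have "((\<lambda>_::nat. f y) \<longlongrightarrow> f x) sequentially"
    by (intro bdd_J1_continuous_tendsto[OF f x y]) auto
  then show ?thesis by (simp add: LIMSEQ_const_iff)
qed


section \<open>Cadlag paths\<close>

locale unit_partition =
  fixes m :: nat and a :: "nat \<Rightarrow> real"
  assumes a0: "a 0 = 0" and am: "a m = 1" and a_mono: "strict_mono_on {0..m} a"
begin

lemma m_pos: "0 < m"
  using a0 am by (cases m) auto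

lemma a_less: "i < j \<Longrightarrow> j \<le> m \<Longrightarrow> a i < a j"
  using a_mono by (auto simp: strict_mono_on_def)

lemma a_le: "i \<le> j \<Longrightarrow> j \<le> m \<Longrightarrow> a i \<le> a j"
  by (rule strict_mono_on_leD[OF a_mono]) auto

lemma a_in_unit: "i \<le> m \<Longrightarrow> 0 \<le> a i \<and> a i \<le> 1"
  using a_le[of 0 i] a_le[of i m] a0 am by auto

lemma cell_right_open:
  assumes "0 \<le> t" "t < 1"
  obtains i where "i < m" "a i \<le> t" "t < a (Suc i)"
proof -
  define i where "i = Max {i. i < m \<and> a i \<le> t}"
  have "i \<in> {i. i < m \<and> a i \<le> t}"
    unfolding i_def using m_pos a0 assms by (intro Max_in) auto
  moreover have "t < a (Suc i)"
  proof (cases "Suc i < m")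
    case True
    have "Suc i \<notin> {i. i < m \<and> a i \<le> t}"
      using Max_ge[of "{i. i < m \<and> a i \<le> t}" "Suc i"] unfolding i_def[symmetric] by auto
    then show ?thesis using True by auto
  next
    case False
    then have "Suc i = m" using \<open>i \<in> _\<close> by auto
    then show ?thesis using am assms by simp
  qed
  ultimately show ?thesis using that by auto
qed

lemma cell_closed:
  assumes "0 \<le> t" "t \<le> 1"
  obtains i where "i < m" "a i \<le> t" "t \<le> a (Suc i)"
proof (cases "t < 1")
  case True
  obtain i where "i < m" "a i \<le> t" "t < a (Suc i)" by (rule cell_right_open[OF assms(1) True])
  then show ?thesis by (intro that[of i]) auto
next
  case False
  then have "t = 1" using assms by simp
  then show ?thesis using that[of "m - 1"] a_in_unit[of "m - 1"] m_pos am by simp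
qed

end

definition has_osc_partition :: "(real \<Rightarrow> real) \<Rightarrow> real \<Rightarrow> real \<Rightarrow> bool" where
  "has_osc_partition x e s \<longleftrightarrow> (\<exists>m (a::nat \<Rightarrow> real). a 0 = 0 \<and> a m = s \<and> strict_mono_on {0..m} a \<and>
     (\<forall>i<m. \<forall>u v. a i \<le> u \<longrightarrow> u < a (Suc i) \<longrightarrow> a i \<le> v \<longrightarrow> v < a (Suc i) \<longrightarrow> \<bar>x u - x v\<bar> \<le> e))"

lemma has_osc_partition_0: "has_osc_partition x e 0"
  unfolding has_osc_partition_def by (rule exI[of _ 0], rule exI[of _ "\<lambda>_. 0"]) (auto simp: strict_mono_on_def)

lemma has_osc_partition_extend:
  assumes "has_osc_partition x e s" and "s < s'"
    and osc: "\<And>u v. s \<le> u \<Longrightarrow> u < s' \<Longrightarrow> s \<le> v \<Longrightarrow> v < s' \<Longrightarrow> \<bar>x u - x v\<bar> \<le> e"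
  shows "has_osc_partition x e s'"
proof -
  obtain m a where a: "a 0 = 0" "a m = s" "strict_mono_on {0..m} a"
    and osc_a: "\<forall>i<m. \<forall>u v. a i \<le> u \<longrightarrow> u < a (Suc i) \<longrightarrow> a i \<le> v \<longrightarrow> v < a (Suc i) \<longrightarrow> \<bar>x u - x v\<bar> \<le> e"
    using assms(1) unfolding has_osc_partition_def by blast
  define a' where "a' = a(Suc m := s')"
  have "a i \<le> s" if "i \<le> m" for i
    using strict_mono_on_leD[OF a(3), of i m] that a(2) by auto
  then have "strict_mono_on {0..Suc m} a'"
    using a(3) \<open>s < s'\<close> by (fastforce simp: a'_def strict_mono_on_def less_Suc_eq_le)
  moreover have "\<forall>i<Suc m. \<forall>u v. a' i \<le> u \<longrightarrow> u < a' (Suc i) \<longrightarrow> a' i \<le> v \<longrightarrow> v < a' (Suc i) \<longrightarrow> \<bar>x u - x v\<bar> \<le> e"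
    using osc_a osc a(2) by (auto simp: a'_def less_Suc_eq)
  ultimately show ?thesis unfolding has_osc_partition_def
    by (intro exI[of _ "Suc m"] exI[of _ a']) (auto simp: a'_def a)
qed

lemma has_osc_partition_at_left_limit:
  assumes "0 < \<tau>" "e > 0" and lim: "(x \<longlongrightarrow> l) (at_left \<tau>)"
    and approx: "\<And>b. b < \<tau> \<Longrightarrow> \<exists>s. b < s \<and> s \<le> \<tau> \<and> has_osc_partition x e s"
  shows "has_osc_partition x e \<tau>"
proof -
  have "eventually (\<lambda>u. dist (x u) l < e/2) (at_left \<tau>)"
    using lim \<open>e > 0\<close> tendsto_iff[of x l "at_left \<tau>"] half_gt_zero[of e] by blast
  then obtain b where "b < \<tau>" and near: "\<And>u. b < u \<Longrightarrow> u < \<tau> \<Longrightarrow> dist (x u) l < e/2"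
    using eventually_at_left[of 0 \<tau>] \<open>0 < \<tau>\<close> by auto
  obtain s where "b < s" "s \<le> \<tau>" and part: "has_osc_partition x e s"
    using approx[OF \<open>b < \<tau>\<close>] by blast
  show ?thesis
  proof (cases "s = \<tau>")
    case False
    have "\<bar>x u - x v\<bar> \<le> e" if "s \<le> u" "u < \<tau>" "s \<le> v" "v < \<tau>" for u v
      using near[of u] near[of v] that \<open>b < s\<close> by (auto simp: dist_real_def abs_if split: if_splits)
    then show ?thesis
      using has_osc_partition_extend[OF part] False \<open>s \<le> \<tau>\<close> by simp
  qed (use part in simp)
qed

lemma has_osc_partition_at_right_cont:
  assumes "e > 0" "\<tau> < c" and cont: "(x \<longlongrightarrow> x \<tau>) (at_right \<tau>)" and part: "has_osc_partition x e \<tau>"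
  obtains s where "\<tau> < s" "s \<le> c" "has_osc_partition x e s"
proof -
  have "eventually (\<lambda>u. dist (x u) (x \<tau>) < e/2) (at_right \<tau>)"
    using cont \<open>e > 0\<close> tendsto_iff[of x "x \<tau>" "at_right \<tau>"] half_gt_zero[of e] by blast
  then obtain b where "\<tau> < b" and near: "\<And>u. \<tau> < u \<Longrightarrow> u < b \<Longrightarrow> dist (x u) (x \<tau>) < e/2"
    using eventually_at_right[of \<tau> c] \<open>\<tau> < c\<close> by auto
  define s where "s = min b c"
  have close: "\<bar>x u - x \<tau>\<bar> \<le> e/2" if "\<tau> \<le> u" "u < s" for u
    using near[of u] that \<open>e > 0\<close> by (cases "u = \<tau>") (auto simp: s_def dist_real_def)
  have "\<tau> < s" using \<open>\<tau> < b\<close> \<open>\<tau> < c\<close> by (simp add: s_def)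
  moreover have "\<bar>x u - x v\<bar> \<le> e" if "\<tau> \<le> u" "u < s" "\<tau> \<le> v" "v < s" for u v
    using close[of u] close[of v] that by (auto simp: abs_if split: if_splits)
  ultimately have "has_osc_partition x e s"
    by (rule has_osc_partition_extend[OF part])
  then show ?thesis using \<open>\<tau> < s\<close> that[of s] by (simp add: s_def)
qed

lemma cadlag01_has_osc_partition:
  assumes x: "cadlag01 x" and "e > 0"
  shows "has_osc_partition x e 1"
proof -
  define S where "S = {s\<in>{0..1}. has_osc_partition x e s}"
  have "0 \<in> S" unfolding S_def using has_osc_partition_0 by auto
  have bdd: "bdd_above S" unfolding S_def by (rule bdd_aboveI[of _ 1]) auto
  define \<tau> where "\<tau> = Sup S"
  have "0 \<le> \<tau>" unfolding \<tau>_def using \<open>0 \<in> S\<close> bdd by (auto intro: cSup_upper)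
  have "\<tau> \<le> 1" unfolding \<tau>_def by (rule cSup_least) (use \<open>0 \<in> S\<close> S_def in blast, simp add: S_def)
  have "has_osc_partition x e \<tau>"
  proof (cases "\<tau> = 0")
    case False
    obtain l where "(x \<longlongrightarrow> l) (at_left \<tau>)"
      using x False \<open>0 \<le> \<tau>\<close> \<open>\<tau> \<le> 1\<close> unfolding cadlag01_def by fastforce
    moreover have "\<exists>s. b < s \<and> s \<le> \<tau> \<and> has_osc_partition x e s" if "b < \<tau>" for b
      using less_cSupD[of S b] \<open>0 \<in> S\<close> that cSup_upper[OF _ bdd] unfolding \<tau>_def S_def by blast
    ultimately show ?thesis
      using has_osc_partition_at_left_limit False \<open>0 \<le> \<tau>\<close> \<open>e > 0\<close> by simp
  next
    case True
    then show ?thesis using has_osc_partition_0 by simp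
  qed
  moreover have "\<tau> = 1"
  proof (rule ccontr)
    assume "\<tau> \<noteq> 1"
    with \<open>\<tau> \<le> 1\<close> have "\<tau> < 1" by simp
    with x \<open>0 \<le> \<tau>\<close> have "(x \<longlongrightarrow> x \<tau>) (at_right \<tau>)" unfolding cadlag01_def by auto
    then obtain s where "\<tau> < s" "s \<le> 1" "has_osc_partition x e s"
      using has_osc_partition_at_right_cont \<open>e > 0\<close> \<open>\<tau> < 1\<close> \<open>has_osc_partition x e \<tau>\<close> by metis
    then have "s \<in> S" using \<open>0 \<le> \<tau>\<close> unfolding S_def by auto
    then show False using cSup_upper[OF _ bdd] \<open>\<tau> < s\<close> unfolding \<tau>_def by fastforce
  qed
  ultimately show ?thesis by simp
qed

lemma cadlag01_osc_partition:
  assumes "cadlag01 x" and "e > 0"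
  obtains m a where "unit_partition m a"
    and "\<And>i u v. i < m \<Longrightarrow> a i \<le> u \<Longrightarrow> u < a (Suc i) \<Longrightarrow> a i \<le> v \<Longrightarrow> v < a (Suc i) \<Longrightarrow> \<bar>x u - x v\<bar> \<le> e"
  using cadlag01_has_osc_partition[OF assms] that
  unfolding has_osc_partition_def unit_partition_def by blast

lemma cadlag01_bounded:
  assumes "cadlag01 x"
  obtains B where "0 \<le> B" "\<And>t. t \<in> {0..1} \<Longrightarrow> \<bar>x t\<bar> \<le> B"
proof -
  obtain m a where "unit_partition m a"
    and osc: "\<And>i u v. i < m \<Longrightarrow> a i \<le> u \<Longrightarrow> u < a (Suc i) \<Longrightarrow> a i \<le> v \<Longrightarrow> v < a (Suc i) \<Longrightarrow> \<bar>x u - x v\<bar> \<le> 1"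
    using cadlag01_osc_partition[OF assms, of 1] by auto
  interpret unit_partition m a by fact
  define B where "B = (\<Sum>i\<le>m. \<bar>x (a i)\<bar>) + 1"
  have le_B: "\<bar>x (a i)\<bar> + 1 \<le> B" if "i \<le> m" for i
    unfolding B_def using that by (auto intro: member_le_sum)
  have "\<bar>x t\<bar> \<le> B" if t: "0 \<le> t" "t \<le> 1" for t
  proof (cases "t < 1")
    case True
    with t(1) obtain i where i: "i < m" "a i \<le> t" "t < a (Suc i)" by (rule cell_right_open)
    then have "\<bar>x t - x (a i)\<bar> \<le> 1" using osc a_less[of i "Suc i"] by auto
    then show ?thesis using le_B[of i] i by linarith
  next
    case False
    then show ?thesis using le_B[of m] am t by simp
  qed
  moreover have "0 \<le> B" unfolding B_def by (simp add: sum_nonneg)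
  ultimately show ?thesis using that by auto
qed

lemma cadlag01_floor_path: "cadlag01 (\<lambda>t. F \<lfloor>real n * t\<rfloor>)"
proof (cases "n = 0")
  case False
  then have "real n > 0" by simp
  have right: "((\<lambda>t. F \<lfloor>real n * t\<rfloor>) \<longlongrightarrow> F \<lfloor>real n * t\<rfloor>) (at_right t)" for t
  proof (rule tendsto_eventually)
    define b where "b = (real_of_int \<lfloor>real n * t\<rfloor> + 1) / real n"
    have "t < b" unfolding b_def using \<open>real n > 0\<close> by (simp add: field_simps) linarith
    moreover have "\<lfloor>real n * s\<rfloor> = \<lfloor>real n * t\<rfloor>" if "t < s" "s < b" for s
    proof (rule floor_unique)
      have "real n * t \<le> real n * s" using that \<open>real n > 0\<close> by simp
      then show "real_of_int \<lfloor>real n * t\<rfloor> \<le> real n * s" by linarith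
      show "real n * s < real_of_int \<lfloor>real n * t\<rfloor> + 1"
        using that \<open>real n > 0\<close> unfolding b_def by (simp add: field_simps)
    qed
    ultimately show "eventually (\<lambda>s. F \<lfloor>real n * s\<rfloor> = F \<lfloor>real n * t\<rfloor>) (at_right t)"
      using eventually_at_right[of t b] by auto
  qed
  have left: "((\<lambda>t. F \<lfloor>real n * t\<rfloor>) \<longlongrightarrow> F (\<lceil>real n * t\<rceil> - 1)) (at_left t)" for t
  proof (rule tendsto_eventually)
    define b where "b = (real_of_int \<lceil>real n * t\<rceil> - 1) / real n"
    have "b < t" unfolding b_def using \<open>real n > 0\<close> by (simp add: field_simps) linarith
    moreover have "\<lfloor>real n * s\<rfloor> = \<lceil>real n * t\<rceil> - 1" if "b < s" "s < t" for s
    proof (rule floor_unique)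
      show "real_of_int (\<lceil>real n * t\<rceil> - 1) \<le> real n * s"
        using that \<open>real n > 0\<close> unfolding b_def by (simp add: field_simps)
      have "real n * s < real n * t" using that \<open>real n > 0\<close> by simp
      then show "real n * s < real_of_int (\<lceil>real n * t\<rceil> - 1) + 1" by linarith
    qed
    ultimately show "eventually (\<lambda>s. F \<lfloor>real n * s\<rfloor> = F (\<lceil>real n * t\<rceil> - 1)) (at_left t)"
      using eventually_at_left[of b t] by auto
  qed
  show ?thesis unfolding cadlag01_def using right left by blast
qed (auto simp: cadlag01_def)


section \<open>Discretization of cadlag paths in the J1 topology\<close>

definition polygonal :: "nat \<Rightarrow> (nat \<Rightarrow> real) \<Rightarrow> (nat \<Rightarrow> real) \<Rightarrow> real \<Rightarrow> real" where
  "polygonal m a b t = (\<Sum>i<m. (b (Suc i) - b i) * max 0 (min 1 ((t - a i) / (a (Suc i) - a i))))"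

lemma polygonal_on_cell:
  assumes a: "strict_mono_on {0..m} a" and "i < m" "a i \<le> t" "t \<le> a (Suc i)"
  shows "polygonal m a b t = b i - b 0 + (b (Suc i) - b i) * ((t - a i) / (a (Suc i) - a i))"
proof -
  define f where "f j = (b (Suc j) - b j) * max 0 (min 1 ((t - a j) / (a (Suc j) - a j)))" for j
  have gap: "a j < a (Suc j)" if "j < m" for j using a that by (auto simp: strict_mono_on_def)
  have split: "{..<m} = {..<Suc i} \<union> {Suc i..<m}" using \<open>i < m\<close> by auto
  have "polygonal m a b t = sum f {..<Suc i} + sum f {Suc i..<m}"
    unfolding polygonal_def f_def[symmetric] split by (rule sum.union_disjoint) auto
  also have "sum f {..<Suc i} = sum f {..<i} + f i" by simp
  also have "sum f {Suc i..<m} = 0"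
  proof (rule sum.neutral, clarify)
    fix j assume "j \<in> {Suc i..<m}"
    then have "a (Suc i) \<le> a j" "a j < a (Suc j)"
      using strict_mono_on_leD[OF a, of "Suc i" j] gap[of j] by auto
    then show "f j = 0" unfolding f_def using assms by (simp add: divide_nonpos_pos)
  qed
  also have "sum f {..<i} = (\<Sum>j<i. b (Suc j) - b j)"
  proof (rule sum.cong)
    fix j assume "j \<in> {..<i}"
    then have "a (Suc j) \<le> a i" "a j < a (Suc j)"
      using strict_mono_on_leD[OF a, of "Suc j" i] gap[of j] \<open>i < m\<close> by auto
    then show "f j = b (Suc j) - b j" unfolding f_def using assms by (simp add: divide_simps)
  qed simp
  also have "\<dots> = b i - b 0" by (rule sum_lessThan_telescope)
  also have "f i = (b (Suc i) - b i) * ((t - a i) / (a (Suc i) - a i))"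
    unfolding f_def using assms gap[OF \<open>i < m\<close>] by (simp add: divide_simps)
  finally show ?thesis by simp
qed

text \<open>The time change \<open>\<tau>\<close> moves every partition point \<open>a i\<close> up to the grid \<open>\<int>/n\<close>; as the cells
  are at least \<open>1/n\<close> long, \<open>\<lfloor>n \<tau> t\<rfloor>/n\<close> then stays in the cell of \<open>t\<close>.\<close>

locale grid_partition = unit_partition +
  fixes n :: nat
  assumes mesh: "\<And>i. i < m \<Longrightarrow> 1 \<le> real n * (a (Suc i) - a i)"
begin

definition grid_ceil :: "nat \<Rightarrow> real" where
  "grid_ceil i = real_of_int \<lceil>real n * a i\<rceil> / real n"

definition \<tau> :: "real \<Rightarrow> real" where
  "\<tau> = polygonal m a grid_ceil"

lemma n_pos: "0 < real n"
  using mesh[OF m_pos] a_less[of 0 1] m_pos by (cases n) auto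

lemma a_gap: "i < m \<Longrightarrow> a i < a (Suc i)"
  by (rule a_less) auto

lemma n_grid_ceil: "real n * grid_ceil i = real_of_int \<lceil>real n * a i\<rceil>"
  unfolding grid_ceil_def using n_pos by simp

lemma grid_ceil_bounds: "a i \<le> grid_ceil i" "grid_ceil i < a i + 1 / real n"
proof -
  have "real n * a i \<le> real n * grid_ceil i" "real n * grid_ceil i < real n * a i + 1"
    unfolding n_grid_ceil by linarith+
  then show "a i \<le> grid_ceil i" "grid_ceil i < a i + 1 / real n"
    using n_pos by (simp_all add: field_simps)
qed

lemma grid_ceil_0: "grid_ceil 0 = 0" and grid_ceil_m: "grid_ceil m = 1"
  unfolding grid_ceil_def a0 am using n_pos by simp_all

lemma grid_ceil_gap: "i < m \<Longrightarrow> grid_ceil i < grid_ceil (Suc i)"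
  using mesh[of i] n_grid_ceil[of i] n_grid_ceil[of "Suc i"] n_pos
  by (smt (verit, best) ceiling_correct mult_less_cancel_left_pos right_diff_distrib)

lemma grid_ceil_mono: "i \<le> j \<Longrightarrow> j \<le> m \<Longrightarrow> grid_ceil i \<le> grid_ceil j"
  unfolding grid_ceil_def using a_le n_pos
  by (simp add: ceiling_mono divide_right_mono mult_left_mono)

lemma \<tau>_on_cell:
  assumes "i < m" "a i \<le> t" "t \<le> a (Suc i)"
  shows "\<tau> t = grid_ceil i + (grid_ceil (Suc i) - grid_ceil i) * ((t - a i) / (a (Suc i) - a i))"
  using polygonal_on_cell[OF a_mono assms] grid_ceil_0 unfolding \<tau>_def by simp

lemma \<tau>_cell_bounds:
  assumes "i < m" "a i \<le> t" "t \<le> a (Suc i)"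
  shows "grid_ceil i \<le> \<tau> t" "\<tau> t \<le> grid_ceil (Suc i)"
    and "t < a (Suc i) \<Longrightarrow> \<tau> t < grid_ceil (Suc i)"
proof -
  define \<theta> where "\<theta> = (t - a i) / (a (Suc i) - a i)"
  have "0 \<le> \<theta>" "\<theta> \<le> 1" and "t < a (Suc i) \<Longrightarrow> \<theta> < 1"
    unfolding \<theta>_def using assms a_gap[OF \<open>i < m\<close>] by (auto simp: divide_simps)
  define g where "g = grid_ceil (Suc i) - grid_ceil i"
  have "0 < g" unfolding g_def using grid_ceil_gap[OF \<open>i < m\<close>] by simp
  have \<tau>_eq: "\<tau> t = grid_ceil i + g * \<theta>"
    using \<tau>_on_cell[OF assms] unfolding \<theta>_def g_def .
  show "grid_ceil i \<le> \<tau> t"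
    using \<tau>_eq mult_nonneg_nonneg[of g \<theta>] \<open>0 < g\<close> \<open>0 \<le> \<theta>\<close> by simp
  have "g * \<theta> \<le> g" using mult_left_le[OF \<open>\<theta> \<le> 1\<close>] \<open>0 < g\<close> by simp
  then show "\<tau> t \<le> grid_ceil (Suc i)" using \<tau>_eq g_def by linarith
  show "\<tau> t < grid_ceil (Suc i)" if "t < a (Suc i)"
    using \<tau>_eq mult_strict_left_mono[OF \<open>t < a (Suc i) \<Longrightarrow> \<theta> < 1\<close>[OF that] \<open>0 < g\<close>]
    unfolding g_def by simp
qed

lemma \<tau>_strict_mono: "strict_mono_on {0..1} \<tau>"
proof (rule strict_mono_onI)
  fix t t' :: real assume tt: "t \<in> {0..1}" "t' \<in> {0..1}" "t < t'"
  then have "0 \<le> t" "t < 1" by auto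
  then obtain i where i: "i < m" "a i \<le> t" "t < a (Suc i)" by (rule cell_right_open)
  show "\<tau> t < \<tau> t'"
  proof (cases "t' \<le> a (Suc i)")
    case True
    define \<theta> where "\<theta> s = (s - a i) / (a (Suc i) - a i)" for s
    have "\<theta> t < \<theta> t'" unfolding \<theta>_def using tt a_gap[OF i(1)] by (intro divide_strict_right_mono) auto
    then have "(grid_ceil (Suc i) - grid_ceil i) * \<theta> t < (grid_ceil (Suc i) - grid_ceil i) * \<theta> t'"
      using grid_ceil_gap[OF i(1)] by (intro mult_strict_left_mono) auto
    moreover have "\<tau> s = grid_ceil i + (grid_ceil (Suc i) - grid_ceil i) * \<theta> s" if "s \<in> {t, t'}" for s
      unfolding \<theta>_def using \<tau>_on_cell[of i s] i True tt that by auto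
    ultimately show ?thesis by simp
  next
    case False
    from tt have "0 \<le> t'" "t' \<le> 1" by auto
    then obtain j where j: "j < m" "a j \<le> t'" "t' \<le> a (Suc j)" by (rule cell_closed)
    have "Suc i \<le> j" using a_le[of "Suc j" "Suc i"] i j False by (cases "Suc i \<le> j") auto
    then have "\<tau> t < grid_ceil (Suc i)" "grid_ceil (Suc i) \<le> \<tau> t'"
      using \<tau>_cell_bounds[OF i(1,2) less_imp_le[OF i(3)]] i(3)
        grid_ceil_mono[of "Suc i" j] \<tau>_cell_bounds(1)[OF j] j(1) by auto
    then show ?thesis by simp
  qed
qed

lemma \<tau>_time_change: "\<tau> \<in> time_changes01"
proof -
  have "continuous_on {0..1} \<tau>"
    unfolding \<tau>_def polygonal_def by (intro continuous_intros) (use a_gap in force)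
  moreover have "\<tau> 0 = 0" using \<tau>_on_cell[of 0 0] m_pos a0 a_gap[of 0] grid_ceil_0 by simp
  moreover have "\<tau> 1 = 1"
    using \<tau>_on_cell[of "m - 1" 1] a_in_unit[of "m - 1"] m_pos am a_gap[of "m - 1"] grid_ceil_m by simp
  ultimately show ?thesis unfolding time_changes01_def using \<tau>_strict_mono by simp
qed

lemma \<tau>_unit:
  assumes "t \<in> {0..1}"
  shows "0 \<le> \<tau> t" "\<tau> t \<le> 1"
proof -
  from assms have "0 \<le> t" "t \<le> 1" by auto
  then obtain i where i: "i < m" "a i \<le> t" "t \<le> a (Suc i)" by (rule cell_closed)
  then show "0 \<le> \<tau> t" "\<tau> t \<le> 1"
    using \<tau>_cell_bounds[OF i] grid_ceil_mono[of 0 i] grid_ceil_mono[of "Suc i" m] grid_ceil_0 grid_ceil_m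
    by auto
qed

lemma \<tau>_close:
  assumes "t \<in> {0..1}"
  shows "\<bar>\<tau> t - t\<bar> \<le> 1 / real n"
proof -
  from assms have "0 \<le> t" "t \<le> 1" by auto
  then obtain i where i: "i < m" "a i \<le> t" "t \<le> a (Suc i)" by (rule cell_closed)
  define \<theta> where "\<theta> = (t - a i) / (a (Suc i) - a i)"
  have "0 \<le> \<theta>" "\<theta> \<le> 1" unfolding \<theta>_def using i a_gap[OF i(1)] by (auto simp: divide_simps)
  have "t = a i + \<theta> * (a (Suc i) - a i)" unfolding \<theta>_def using a_gap[OF i(1)] by simp
  define E where "E = (1 - \<theta>) * (grid_ceil i - a i) + \<theta> * (grid_ceil (Suc i) - a (Suc i))"
  have "t = a i + \<theta> * (a (Suc i) - a i)" unfolding \<theta>_def using a_gap[OF i(1)] by simp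
  then have eq: "\<tau> t - t = E"
    using \<tau>_on_cell[OF i] unfolding \<theta>_def[symmetric] E_def by (simp add: algebra_simps)
  have "0 \<le> E"
    unfolding E_def using \<open>0 \<le> \<theta>\<close> \<open>\<theta> \<le> 1\<close> grid_ceil_bounds by simp
  have "E \<le> (1 - \<theta>) * (1 / real n) + \<theta> * (1 / real n)"
    unfolding E_def using \<open>0 \<le> \<theta>\<close> \<open>\<theta> \<le> 1\<close> grid_ceil_bounds[of i] grid_ceil_bounds[of "Suc i"]
    by (intro add_mono mult_left_mono) auto
  also have "\<dots> = 1 / real n" using n_pos by (simp add: field_simps)
  finally show ?thesis using eq \<open>0 \<le> E\<close> by simp
qed

lemma floor_\<tau>_in_cell:
  assumes "i < m" "a i \<le> t" "t < a (Suc i)"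
  shows "a i \<le> real_of_int \<lfloor>real n * \<tau> t\<rfloor> / real n"
    and "real_of_int \<lfloor>real n * \<tau> t\<rfloor> / real n < a (Suc i)"
proof -
  have "real n * grid_ceil i \<le> real n * \<tau> t" "real n * \<tau> t < real n * grid_ceil (Suc i)"
    using \<tau>_cell_bounds[OF assms(1,2) less_imp_le[OF assms(3)]] \<tau>_cell_bounds(3)[OF assms(1,2)]
      assms(3) n_pos by auto
  then have "\<lceil>real n * a i\<rceil> \<le> \<lfloor>real n * \<tau> t\<rfloor>" "\<lfloor>real n * \<tau> t\<rfloor> < \<lceil>real n * a (Suc i)\<rceil>"
    unfolding n_grid_ceil by (simp_all add: le_floor_iff floor_less_iff)
  then have "real n * a i \<le> real_of_int \<lfloor>real n * \<tau> t\<rfloor>"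
    and "real_of_int \<lfloor>real n * \<tau> t\<rfloor> < real n * a (Suc i)"
    by (meson le_of_int_ceiling of_int_le_iff order_trans, linarith)
  then show "a i \<le> real_of_int \<lfloor>real n * \<tau> t\<rfloor> / real n"
    and "real_of_int \<lfloor>real n * \<tau> t\<rfloor> / real n < a (Suc i)"
    using n_pos by (simp_all add: field_simps)
qed

lemma skorokhod_J1_discretization_le:
  assumes osc: "\<And>i u v. i < m \<Longrightarrow> a i \<le> u \<Longrightarrow> u < a (Suc i) \<Longrightarrow> a i \<le> v \<Longrightarrow> v < a (Suc i) \<Longrightarrow> \<bar>x u - x v\<bar> \<le> e"
    and bound: "\<And>t. t \<in> {0..1} \<Longrightarrow> \<bar>x t\<bar> \<le> B"
    and "0 \<le> e" "1 / real n \<le> e + \<bar>c - 1\<bar> * B"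
  shows "skorokhod_J1 x (\<lambda>t. c * x (real (min n (nat \<lfloor>real n * t\<rfloor>)) / real n)) \<le> e + \<bar>c - 1\<bar> * B"
proof (rule skorokhod_J1_le[OF \<tau>_time_change])
  show "\<forall>t\<in>{0..1}. \<bar>\<tau> t - t\<bar> \<le> e + \<bar>c - 1\<bar> * B"
    using \<tau>_close assms(4) by fastforce
  show "\<forall>t\<in>{0..1}. \<bar>x t - c * x (real (min n (nat \<lfloor>real n * \<tau> t\<rfloor>)) / real n)\<bar> \<le> e + \<bar>c - 1\<bar> * B"
  proof
    fix t :: real assume t: "t \<in> {0..1}"
    define s where "s = real_of_int \<lfloor>real n * \<tau> t\<rfloor> / real n"
    have "real n * \<tau> t \<le> real n" using \<tau>_unit[OF t] n_pos by (simp add: mult_left_le)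
    then have "\<lfloor>real n * \<tau> t\<rfloor> \<le> int n" using floor_mono by fastforce
    moreover have "0 \<le> \<lfloor>real n * \<tau> t\<rfloor>" using \<tau>_unit[OF t] n_pos by simp
    ultimately have s: "real (min n (nat \<lfloor>real n * \<tau> t\<rfloor>)) / real n = s" "s \<in> {0..1}"
      unfolding s_def using n_pos by (auto simp: divide_simps)
    have "\<bar>x t - x s\<bar> \<le> e"
    proof (cases "t < 1")
      case True
      have "0 \<le> t" using t by simp
      from this True obtain i where "i < m" "a i \<le> t" "t < a (Suc i)" by (rule cell_right_open)
      then show ?thesis using osc floor_\<tau>_in_cell unfolding s_def by blast
    next
      case False
      then have "s = t" using t \<tau>_time_change n_pos unfolding s_def time_changes01_def by auto
      then show ?thesis using \<open>0 \<le> e\<close> by simp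
    qed
    moreover have "\<bar>c - 1\<bar> * \<bar>x s\<bar> \<le> \<bar>c - 1\<bar> * B" using bound[OF s(2)] by (simp add: mult_left_mono)
    moreover have "\<bar>x t - c * x s\<bar> \<le> \<bar>x t - x s\<bar> + \<bar>c - 1\<bar> * \<bar>x s\<bar>"
    proof -
      have "x t - c * x s = (x t - x s) - (c - 1) * x s" by (simp add: algebra_simps)
      then show ?thesis by (metis abs_mult abs_triangle_ineq4)
    qed
    ultimately show "\<bar>x t - c * x (real (min n (nat \<lfloor>real n * \<tau> t\<rfloor>)) / real n)\<bar> \<le> e + \<bar>c - 1\<bar> * B"
      unfolding s(1) by linarith
  qed
qed

end

lemma skorokhod_J1_discretization_tendsto:
  assumes x: "cadlag01 x" and c: "c \<longlonglongrightarrow> 1" and "d > 0"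
  shows "eventually (\<lambda>n. skorokhod_J1 x (\<lambda>t. c n * x (real (min n (nat \<lfloor>real n * t\<rfloor>)) / real n)) < d) sequentially"
proof -
  define e where "e = d / 4"
  have "e > 0" using \<open>d > 0\<close> unfolding e_def by simp
  obtain m a where part: "unit_partition m a"
    and osc: "\<And>i u v. i < m \<Longrightarrow> a i \<le> u \<Longrightarrow> u < a (Suc i) \<Longrightarrow> a i \<le> v \<Longrightarrow> v < a (Suc i) \<Longrightarrow> \<bar>x u - x v\<bar> \<le> e"
    using cadlag01_osc_partition[OF x \<open>e > 0\<close>] by blast
  obtain B where "0 \<le> B" and bound: "\<And>t. t \<in> {0..1} \<Longrightarrow> \<bar>x t\<bar> \<le> B"
    using cadlag01_bounded[OF x] by blast
  have ev_ge: "eventually (\<lambda>n. K \<le> real n) sequentially" for K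
    using filterlim_real_sequentially unfolding filterlim_at_top by auto
  have "eventually (\<lambda>n. 1 / e \<le> real n \<and> (\<forall>i\<in>{..<m}. 1 / (a (Suc i) - a i) \<le> real n)) sequentially"
    by (intro eventually_conj eventually_ball_finite ballI ev_ge) auto
  moreover have "eventually (\<lambda>n. \<bar>c n - 1\<bar> * B \<le> e) sequentially"
  proof -
    have "((\<lambda>n. \<bar>c n - 1\<bar> * B) \<longlongrightarrow> \<bar>1 - 1\<bar> * B) sequentially"
      by (intro tendsto_intros c)
    then have "eventually (\<lambda>n. \<bar>c n - 1\<bar> * B < e) sequentially"
      using \<open>e > 0\<close> by (intro order_tendstoD(2)) auto
    then show ?thesis by (rule eventually_mono) simp
  qed
  ultimately show ?thesis
  proof eventually_elim
    case (elim n)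
    interpret unit_partition m a by (fact part)
    have "1 \<le> real n * (a (Suc i) - a i)" if "i < m" for i
    proof -
      have "0 < a (Suc i) - a i" "1 / (a (Suc i) - a i) \<le> real n"
        using a_less[of i "Suc i"] elim that by auto
      then show ?thesis by (simp add: pos_divide_le_eq mult.commute)
    qed
    then interpret grid_partition m a n by unfold_locales
    have "1 / real n \<le> e" using elim \<open>e > 0\<close> n_pos by (simp add: field_simps)
    then have "skorokhod_J1 x (\<lambda>t. c n * x (real (min n (nat \<lfloor>real n * t\<rfloor>)) / real n)) \<le> e + \<bar>c n - 1\<bar> * B"
      using \<open>e > 0\<close> \<open>0 \<le> B\<close>
      by (intro skorokhod_J1_discretization_le[OF osc bound]) (auto intro: add_increasing2)
    then show ?case using elim \<open>d > 0\<close> unfolding e_def by linarith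
  qed
qed


section \<open>The harmonic sum over a block of scales\<close>

lemma nat_floor_div_tendsto_1:
  assumes A: "filterlim A at_top F"
  shows "((\<lambda>x. real (nat \<lfloor>A x\<rfloor>) / A x) \<longlongrightarrow> 1) F"
proof (rule tendsto_sandwich)
  have ev: "eventually (\<lambda>x. 1 \<le> A x) F" using A unfolding filterlim_at_top by auto
  show "eventually (\<lambda>x. (A x - 1) / A x \<le> real (nat \<lfloor>A x\<rfloor>) / A x) F"
    using ev by eventually_elim (rule divide_right_mono; linarith)
  show "eventually (\<lambda>x. real (nat \<lfloor>A x\<rfloor>) / A x \<le> 1) F"
    using ev
  proof eventually_elim
    case (elim x)
    then have "real (nat \<lfloor>A x\<rfloor>) \<le> A x" by linarith
    with elim show ?case by (simp add: divide_le_eq_1)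
  qed
  have "((\<lambda>y::real. (y - 1) / y) \<longlongrightarrow> 1) at_top" by real_asymp
  then show "((\<lambda>x. (A x - 1) / A x) \<longlongrightarrow> 1) F" using filterlim_compose[OF _ A] by blast
qed simp

lemma sum_inverse_greaterThanAtMost:
  assumes "v \<le> u"
  shows "(\<Sum>k\<in>{v<..u}. 1 / real k) = harm u - harm v"
proof -
  have "{1..u} = {1..v} \<union> {v<..u}" using assms by auto
  then have "harm u = (\<Sum>k\<in>{1..v}. inverse (real k)) + (\<Sum>k\<in>{v<..u}. inverse (real k))"
    unfolding harm_def by (simp add: sum.union_disjoint ivl_disj_int)
  then show ?thesis unfolding harm_def by (simp add: divide_inverse)
qed

lemma nat_interval_eq_greaterThanAtMost:
  assumes "0 \<le> a"
  shows "{k::nat. a < real k \<and> real k \<le> b} = {nat \<lfloor>a\<rfloor><..nat \<lfloor>b\<rfloor>}"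
proof -
  have "a < real k \<longleftrightarrow> nat \<lfloor>a\<rfloor> < k" for k using assms by linarith
  moreover have "a < real k \<Longrightarrow> real k \<le> b \<longleftrightarrow> k \<le> nat \<lfloor>b\<rfloor>" for k using assms by linarith
  ultimately show ?thesis by auto
qed

lemma harmonic_block_tendsto_ln2:
  assumes A: "filterlim A at_top F"
  shows "((\<lambda>x. \<Sum>k\<in>{k::nat. A x / 2 < real k \<and> real k \<le> A x}. 1 / real k) \<longlongrightarrow> ln 2) F"
proof -
  have A2: "filterlim (\<lambda>x. A x / 2) at_top F"
    using filterlim_tendsto_pos_mult_at_top[OF tendsto_const[of "1 / 2"] _ A] by simp
  define u where "u x = nat \<lfloor>A x\<rfloor>" for x
  define v where "v x = nat \<lfloor>A x / 2\<rfloor>" for x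
  have nat_floor_at_top: "filterlim (\<lambda>x. nat \<lfloor>B x\<rfloor>) at_top F" if "filterlim B at_top F" for B
    using filterlim_compose[OF filterlim_nat_sequentially filterlim_compose[OF filterlim_floor_sequentially that]] .
  let ?H = "\<lambda>w. harm w - ln (real w)"
  have "((\<lambda>x. ?H (u x) - ?H (v x) + ln (real (u x) / A x) - ln (real (v x) / (A x / 2)) + ln 2)
      \<longlongrightarrow> euler_mascheroni - euler_mascheroni + ln 1 - ln 1 + ln 2) F"
    unfolding u_def v_def
    by (intro tendsto_intros filterlim_compose[OF euler_mascheroni_LIMSEQ] nat_floor_at_top A A2
        nat_floor_div_tendsto_1) auto
  moreover have "eventually (\<lambda>x. ?H (u x) - ?H (v x) + ln (real (u x) / A x) - ln (real (v x) / (A x / 2)) + ln 2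
      = (\<Sum>k\<in>{k::nat. A x / 2 < real k \<and> real k \<le> A x}. 1 / real k)) F"
    using A unfolding filterlim_at_top
  proof (rule eventually_mono[OF spec[of _ 4]])
    fix x assume "4 \<le> A x"
    then have pos: "0 < real (v x)" "v x \<le> u x" unfolding u_def v_def by linarith+
    have "(\<Sum>k\<in>{k::nat. A x / 2 < real k \<and> real k \<le> A x}. 1 / real k) = harm (u x) - harm (v x)"
      using \<open>4 \<le> A x\<close> nat_interval_eq_greaterThanAtMost[of "A x / 2" "A x"]
        sum_inverse_greaterThanAtMost[OF pos(2)] unfolding u_def v_def by simp
    moreover have "0 < A x" "0 < real (u x)" using \<open>4 \<le> A x\<close> pos by linarith+
    ultimately show "?H (u x) - ?H (v x) + ln (real (u x) / A x) - ln (real (v x) / (A x / 2)) + ln 2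
      = (\<Sum>k\<in>{k::nat. A x / 2 < real k \<and> real k \<le> A x}. 1 / real k)"
      using pos by (simp add: ln_div ln_mult)
  qed
  ultimately show ?thesis by (simp add: tendsto_cong)
qed

definition scale_block :: "real \<Rightarrow> nat \<Rightarrow> nat set" where
  "scale_block \<alpha> n = {k::nat. log 2 (real n) / (2 * \<alpha>) < real k \<and> real k \<le> log 2 (real n) / \<alpha>}"

definition block_weight :: "real \<Rightarrow> nat \<Rightarrow> real" where
  "block_weight \<alpha> n = (\<Sum>k\<in>scale_block \<alpha> n. 2 / real k)"

lemma scale_block_pos: "0 < \<alpha> \<Longrightarrow> k \<in> scale_block \<alpha> n \<Longrightarrow> 0 < k"
  unfolding scale_block_def by (cases k) (auto simp: divide_simps split: if_splits)

lemma finite_scale_block: "finite (scale_block \<alpha> n)"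
  by (rule finite_subset[of _ "{..nat \<lceil>log 2 (real n) / \<alpha>\<rceil>}"]) (auto simp: scale_block_def, linarith)

lemma block_weight_nonneg: "0 \<le> block_weight \<alpha> n"
  unfolding block_weight_def by (intro sum_nonneg) auto

lemma block_weight_tendsto:
  assumes "0 < \<alpha>"
  shows "block_weight \<alpha> \<longlonglongrightarrow> 2 * ln 2"
proof -
  have "filterlim (\<lambda>n::nat. log 2 (real n)) at_top sequentially" by real_asymp
  then have A: "filterlim (\<lambda>n. log 2 (real n) / \<alpha>) at_top sequentially"
    using filterlim_tendsto_pos_mult_at_top[OF tendsto_const[of "1 / \<alpha>"]] assms by simp
  have "block_weight \<alpha> = (\<lambda>n. 2 * (\<Sum>k\<in>{k::nat. (log 2 (real n) / \<alpha>) / 2 < real k \<and> real k \<le> log 2 (real n) / \<alpha>}. 1 / real k))"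
    unfolding block_weight_def scale_block_def by (simp add: sum_distrib_left mult.commute)
  then show ?thesis
    by (simp only:) (intro tendsto_mult tendsto_const harmonic_block_tendsto_ln2 A)
qed

text \<open>This is the only place where \<open>\<alpha> < 2\<close> is used.\<close>

lemma scale_block_shift_ge:
  assumes "\<alpha> < 2" and "256 \<le> n" and "k \<in> scale_block \<alpha> n"
  shows "n \<le> 4 ^ (k^2)"
proof -
  define L where "L = log 2 (real n)"
  have "log 2 256 \<le> L" unfolding L_def using assms(2) by simp
  moreover have "log 2 (256::real) = 8" using log_pow_cancel[of 2 8] by simp
  ultimately have "8 \<le> L" by simp
  moreover have "L / (2 * \<alpha>) < real k" using assms(3) unfolding scale_block_def L_def by simp
  moreover have "\<alpha> > 0" using assms(3) \<open>8 \<le> L\<close> unfolding scale_block_def L_def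
    by (auto simp: divide_simps split: if_splits)
  ultimately have "L < real k * (2 * \<alpha>)" by (simp add: pos_divide_less_eq)
  moreover have "real k * (2 * \<alpha>) \<le> real k * 4" using assms(1) by (intro mult_left_mono) auto
  ultimately have "L < 4 * real k" by linarith
  moreover from this \<open>8 \<le> L\<close> have "4 * real k \<le> 2 * real k * real k"
    using mult_left_mono[of 2 "real k" "2 * real k"] by simp
  ultimately have "L \<le> 2 * real k * real k" by linarith
  then have "real n \<le> 2 powr (2 * real k * real k)"
    using assms(2) powr_log_cancel[of 2 "real n"] powr_mono[of L _ 2] unfolding L_def by force
  also have "\<dots> = (2::real) ^ (2 * k^2)"
    by (subst powr_realpow[symmetric]) (simp_all add: power2_eq_square mult.assoc)
  also have "\<dots> = real (4 ^ (k^2))" by (simp add: power_mult)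
  finally show ?thesis by linarith
qed


section \<open>Step paths\<close>

definition step_path :: "nat \<Rightarrow> (nat \<Rightarrow> real) \<Rightarrow> real \<Rightarrow> real" where
  "step_path n y t = (\<Sum>j=1..min n (nat \<lfloor>real n * t\<rfloor>). y j)"

lemma cadlag01_step_path: "cadlag01 (step_path n y)"
  unfolding step_path_def using cadlag01_floor_path[of "\<lambda>z. \<Sum>j=1..min n (nat z). y j" n] by simp

lemma step_path_cong: "(\<And>j. j \<in> {1..n} \<Longrightarrow> y j = z j) \<Longrightarrow> step_path n y = step_path n z"
  unfolding step_path_def by (intro ext sum.cong) auto

lemma step_path_diff_le: "\<bar>step_path n y t - step_path n z t\<bar> \<le> (\<Sum>j=1..n. \<bar>y j - z j\<bar>)"
proof -
  have "\<bar>step_path n y t - step_path n z t\<bar> \<le> (\<Sum>j=1..min n (nat \<lfloor>real n * t\<rfloor>). \<bar>y j - z j\<bar>)"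
    unfolding step_path_def sum_subtractf[symmetric] by (rule sum_abs)
  also have "\<dots> \<le> (\<Sum>j=1..n. \<bar>y j - z j\<bar>)" by (intro sum_mono2) auto
  finally show ?thesis .
qed

lemma step_path_telescope:
  "step_path n (\<lambda>j. c * (g j - g (j - 1))) t = c * (g (min n (nat \<lfloor>real n * t\<rfloor>)) - g 0)"
proof -
  have "(\<Sum>j=1..p. g j - g (j - 1)) = g p - g 0" for p by (induction p) auto
  then show ?thesis unfolding step_path_def by (simp add: sum_distrib_left[symmetric])
qed

lemma continuous_on_step_path_functional:
  assumes f: "bdd_J1_continuous f"
  shows "continuous_on UNIV (\<lambda>y. f (step_path n y))"
  unfolding continuous_on_sequentially
proof (intro allI ballI impI, elim conjE)
  fix ys :: "nat \<Rightarrow> nat \<Rightarrow> real" and y assume lim: "ys \<longlonglongrightarrow> y"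
  have "(\<lambda>i. ys i j) \<longlonglongrightarrow> y j" for j
  proof (rule isCont_tendsto_compose[OF _ lim, of "\<lambda>x. x j"])
    show "isCont (\<lambda>x::nat \<Rightarrow> real. x j) y"
      using continuous_on_product_coordinates[of j]
        continuous_on_eq_continuous_at[of UNIV "\<lambda>x::nat \<Rightarrow> real. x j"] by simp
  qed
  then have "(\<lambda>i. \<Sum>j=1..n. \<bar>ys i j - y j\<bar>) \<longlonglongrightarrow> (\<Sum>j=1..n. \<bar>y j - y j\<bar>)"
    by (intro tendsto_intros)
  then have small: "eventually (\<lambda>i. (\<Sum>j=1..n. \<bar>ys i j - y j\<bar>) < d) sequentially" if "d > 0" for d
    using that by (simp add: order_tendstoD(2))
  have J1_le: "skorokhod_J1 (step_path n y) (step_path n (ys i)) \<le> (\<Sum>j=1..n. \<bar>ys i j - y j\<bar>)" for i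
    using step_path_diff_le[of n y _ "ys i"]
    by (intro skorokhod_J1_le_uniform sum_nonneg) (auto simp: abs_minus_commute)
  show "((\<lambda>y. f (step_path n y)) \<circ> ys) \<longlonglongrightarrow> f (step_path n y)"
    unfolding comp_def
  proof (rule bdd_J1_continuous_tendsto[OF f cadlag01_step_path cadlag01_step_path])
    fix d :: real assume "d > 0"
    from small[OF this] show "eventually (\<lambda>i. skorokhod_J1 (step_path n y) (step_path n (ys i)) < d) sequentially"
      by eventually_elim (rule le_less_trans[OF J1_le])
  qed
qed

lemma borel_measurable_step_path_functional:
  assumes f: "bdd_J1_continuous f"
  shows "(\<lambda>h. f (step_path n h)) \<in> borel_measurable (Pi\<^sub>M {1..n} (\<lambda>_. borel))"
proof -
  define ext where "ext h j = (if j \<in> {1..n} then h j else 0)" for h :: "nat \<Rightarrow> real" and j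
  have "ext \<in> borel_measurable (Pi\<^sub>M {1..n} (\<lambda>_. borel))"
  proof (rule measurable_coordinatewise_then_product)
    fix j
    show "(\<lambda>h. ext h j) \<in> borel_measurable (Pi\<^sub>M {1..n} (\<lambda>_. borel))"
    proof (cases "j \<in> {1..n}")
      case True
      then show ?thesis unfolding ext_def using measurable_component_singleton[OF True] by simp
    next
      case False
      then have "(\<lambda>h. ext h j) = (\<lambda>_. 0)" unfolding ext_def by auto
      then show ?thesis by simp
    qed
  qed
  moreover have "(\<lambda>y. f (step_path n y)) \<in> borel_measurable borel"
    by (rule borel_measurable_continuous_onI[OF continuous_on_step_path_functional[OF f]])
  ultimately have "(\<lambda>y. f (step_path n y)) \<circ> ext \<in> borel_measurable (Pi\<^sub>M {1..n} (\<lambda>_. borel))"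
    by (rule measurable_comp)
  moreover have "step_path n (ext h) = step_path n h" for h
    by (rule step_path_cong) (simp add: ext_def)
  ultimately show ?thesis by (simp add: comp_def)
qed

lemma measurable_step_path_functional_comp:
  assumes f: "bdd_J1_continuous f" and Y: "\<And>j. j \<in> {1..n} \<Longrightarrow> Y j \<in> borel_measurable M"
  shows "(\<lambda>\<omega>. f (step_path n (\<lambda>j. Y j \<omega>))) \<in> borel_measurable M"
proof -
  have "(\<lambda>\<omega>. \<lambda>j\<in>{1..n}. Y j \<omega>) \<in> measurable M (Pi\<^sub>M {1..n} (\<lambda>_. borel))"
    using Y by (rule measurable_restrict)
  moreover have "step_path n (\<lambda>j. Y j \<omega>) = step_path n (\<lambda>j\<in>{1..n}. Y j \<omega>)" for \<omega>
    by (rule step_path_cong) simp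
  ultimately show ?thesis
    using measurable_comp[OF _ borel_measurable_step_path_functional[OF f]] by (simp add: comp_def)
qed


section \<open>Characteristic functions\<close>

lemma stable_cf_symmetric:
  assumes "0 < \<alpha>" "0 \<le> \<sigma>"
  shows "stable_cf \<alpha> \<sigma> 0 0 \<theta> = exp (- complex_of_real (\<sigma> powr \<alpha> * \<bar>\<theta>\<bar> powr \<alpha>))"
  using assms unfolding stable_cf_def by (cases "\<alpha> = 1") (auto simp: powr_one)

lemma stable_cf_mult_reflect:
  assumes "0 < \<alpha>" "0 \<le> \<sigma>"
  shows "stable_cf \<alpha> \<sigma> 1 0 \<theta> * stable_cf \<alpha> \<sigma> 1 0 (- \<theta>) = exp (- complex_of_real (2 * \<sigma> powr \<alpha> * \<bar>\<theta>\<bar> powr \<alpha>))"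
proof (cases "\<alpha> = 1")
  case True
  have "stable_cf \<alpha> \<sigma> 1 0 \<theta> * stable_cf \<alpha> \<sigma> 1 0 (- \<theta>) =
    exp ((- complex_of_real (\<sigma> * \<bar>\<theta>\<bar>) * (1 + \<i> * complex_of_real ((2 / pi) * sgn \<theta> * ln \<bar>\<theta>\<bar>)))
       + (- complex_of_real (\<sigma> * \<bar>\<theta>\<bar>) * (1 - \<i> * complex_of_real ((2 / pi) * sgn \<theta> * ln \<bar>\<theta>\<bar>))))"
    unfolding stable_cf_def exp_add using True by (simp add: sgn_minus)
  also have "\<dots> = exp (- complex_of_real (2 * \<sigma> * \<bar>\<theta>\<bar>))"
    by (rule arg_cong[where f = exp]) (simp add: algebra_simps)
  finally show ?thesis using True assms by (simp add: powr_one)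
next
  case False
  have "stable_cf \<alpha> \<sigma> 1 0 \<theta> * stable_cf \<alpha> \<sigma> 1 0 (- \<theta>) =
    exp ((- complex_of_real (\<sigma> powr \<alpha> * \<bar>\<theta>\<bar> powr \<alpha>) * (1 - \<i> * complex_of_real (sgn \<theta> * tan (pi * \<alpha> / 2))))
       + (- complex_of_real (\<sigma> powr \<alpha> * \<bar>\<theta>\<bar> powr \<alpha>) * (1 + \<i> * complex_of_real (sgn \<theta> * tan (pi * \<alpha> / 2)))))"
    unfolding stable_cf_def exp_add using False by (simp add: sgn_minus)
  also have "\<dots> = exp (- complex_of_real (2 * \<sigma> powr \<alpha> * \<bar>\<theta>\<bar> powr \<alpha>))"
    by (rule arg_cong[where f = exp]) (simp add: algebra_simps)
  finally show ?thesis .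
qed

lemma powr_neg_inverse_powr:
  fixes x :: real
  assumes "0 < x" "0 < \<alpha>"
  shows "(x powr (- 1 / \<alpha>)) powr \<alpha> = 1 / x"
proof -
  have "(x powr (- 1 / \<alpha>)) powr \<alpha> = x powr (- 1 / \<alpha> * \<alpha>)" by (rule powr_powr)
  also have "- 1 / \<alpha> * \<alpha> = - 1" using assms(2) by simp
  finally show ?thesis using assms(1) by (simp add: powr_minus_divide)
qed

lemma stable_cf_symmetrized_scaled:
  fixes s x :: real
  assumes "0 < \<alpha>" "0 < s" "0 < x"
  shows "stable_cf \<alpha> (s powr (- 1 / \<alpha>)) 1 0 (x powr (- 1 / \<alpha>) * \<theta>)
      * stable_cf \<alpha> (s powr (- 1 / \<alpha>)) 1 0 (- (x powr (- 1 / \<alpha>) * \<theta>))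
    = exp (- complex_of_real (2 / s * (\<bar>\<theta>\<bar> powr \<alpha> / x)))"
proof -
  have "\<bar>x powr (- 1 / \<alpha>) * \<theta>\<bar> powr \<alpha> = \<bar>\<theta>\<bar> powr \<alpha> / x"
    using powr_neg_inverse_powr[OF assms(3,1)] by (simp add: abs_mult powr_mult)
  then show ?thesis
    using stable_cf_mult_reflect[OF assms(1), of "s powr (- 1 / \<alpha>)" "x powr (- 1 / \<alpha>) * \<theta>"]
      powr_neg_inverse_powr[OF assms(2,1)] by simp
qed

lemma (in prob_space) char_distr_scale:
  assumes "X \<in> borel_measurable M"
  shows "char (distr M borel (\<lambda>\<omega>. c * X \<omega>)) \<theta> = char (distr M borel X) (c * \<theta>)"
proof -
  have "(\<lambda>\<omega>. c * X \<omega>) \<in> borel_measurable M" using assms by measurable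
  then show ?thesis unfolding char_def
    by (simp add: integral_distr[OF \<open>(\<lambda>\<omega>. c * X \<omega>) \<in> borel_measurable M\<close>] integral_distr[OF assms]
        mult.assoc mult.commute mult.left_commute)
qed

lemma (in prob_space) char_distr_weighted_sum:
  assumes ind: "indep_vars (\<lambda>_. borel) Z Q"
  shows "char (distr M borel (\<lambda>\<omega>. \<Sum>p\<in>Q. w p * Z p \<omega>)) \<theta> = (\<Prod>p\<in>Q. char (distr M borel (Z p)) (w p * \<theta>))"
proof -
  have "indep_vars (\<lambda>_. borel) (\<lambda>p \<omega>. w p * Z p \<omega>) Q"
    by (rule indep_vars_compose2[OF ind, where Y = "\<lambda>p x. w p * x"]) simp
  then have "char (distr M borel (\<lambda>\<omega>. \<Sum>p\<in>Q. w p * Z p \<omega>)) \<theta> = (\<Prod>p\<in>Q. char (distr M borel (\<lambda>\<omega>. w p * Z p \<omega>)) \<theta>)"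
    by (rule char_distr_sum)
  also have "\<dots> = (\<Prod>p\<in>Q. char (distr M borel (Z p)) (w p * \<theta>))"
    using ind by (intro prod.cong refl char_distr_scale) (auto simp: indep_vars_def)
  finally show ?thesis .
qed

lemma (in prob_space) indep_vars_weighted_sums:
  fixes Z :: "'i \<Rightarrow> 'a \<Rightarrow> real"
  assumes ind: "indep_vars (\<lambda>_. borel) Z I"
    and sub: "\<And>j. j \<in> J \<Longrightarrow> P j \<subseteq> I" and disj: "disjoint_family_on P J"
  shows "indep_vars (\<lambda>_. borel) (\<lambda>j \<omega>. \<Sum>p\<in>P j. w j p * Z p \<omega>) J"
proof -
  define h where "h j g = (\<Sum>p\<in>P j. w j p * g p)" for j and g :: "'i \<Rightarrow> real"
  have "indep_vars (\<lambda>_. borel) (\<lambda>j \<omega>. h j (\<lambda>p\<in>P j. Z p \<omega>)) J"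
  proof (rule indep_vars_compose2[OF indep_vars_restrict[OF ind sub disj]])
    fix j show "h j \<in> borel_measurable (Pi\<^sub>M (P j) (\<lambda>_. borel))"
      unfolding h_def
    proof (rule borel_measurable_sum)
      fix p assume "p \<in> P j"
      then have "(\<lambda>g. g p) \<in> borel_measurable (Pi\<^sub>M (P j) (\<lambda>_. borel))"
        by (rule measurable_component_singleton)
      then show "(\<lambda>g. w j p * g p) \<in> borel_measurable (Pi\<^sub>M (P j) (\<lambda>_. borel))"
        by (rule borel_measurable_times[OF borel_measurable_const])
    qed
  qed
  moreover have "h j (\<lambda>p\<in>P j. Z p \<omega>) = (\<Sum>p\<in>P j. w j p * Z p \<omega>)" for j \<omega>
    unfolding h_def by (intro sum.cong) auto
  ultimately show ?thesis by simp
qed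


section \<open>The increments of the process\<close>

definition WM_increment :: "real \<Rightarrow> (nat \<Rightarrow> nat \<Rightarrow> 'a \<Rightarrow> real) \<Rightarrow> nat \<Rightarrow> nat \<Rightarrow> 'a \<Rightarrow> real" where
  "WM_increment \<alpha> X n j \<omega> =
     real n powr (- 1 / \<alpha>) * (\<Sum>k\<in>scale_block \<alpha> n. X k j \<omega> - X k (j + 4 ^ (k^2)) \<omega>)"

lemma WM_eq_step_path:
  assumes "t \<in> {0..1}"
  shows "WM \<alpha> X n \<omega> t = step_path n (\<lambda>j. WM_increment \<alpha> X n j \<omega>) t"
proof -
  have "real n * t \<le> real n" using assms by (simp add: mult_left_le)
  then have "\<lfloor>real n * t\<rfloor> \<le> int n" using floor_mono by fastforce
  then have "min n (nat \<lfloor>real n * t\<rfloor>) = nat \<lfloor>real n * t\<rfloor>" by simp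
  then show ?thesis
    unfolding WM_def step_path_def WM_increment_def scale_block_def[symmetric]
    by (simp add: sum.swap[where A = "scale_block \<alpha> n"] sum_distrib_left)
qed

lemma cadlag01_WM: "cadlag01 (WM \<alpha> X n \<omega>)"
  using cadlag01_floor_path[of "\<lambda>z. real n powr (- 1 / \<alpha>) *
      (\<Sum>k\<in>scale_block \<alpha> n. \<Sum>j=1..nat z. X k j \<omega> - X k (j + 4 ^ (k^2)) \<omega>)" n]
  unfolding WM_def[abs_def] scale_block_def by simp

lemma bdd_J1_continuous_WM_eq:
  assumes "bdd_J1_continuous f"
  shows "f (WM \<alpha> X n \<omega>) = f (step_path n (\<lambda>j. WM_increment \<alpha> X n j \<omega>))"
  using assms cadlag01_WM cadlag01_step_path WM_eq_step_path by (rule bdd_J1_continuous_cong)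

lemma WM_increment_measurable:
  assumes "triangular_array M X \<alpha>" and "0 < \<alpha>" and "1 \<le> j"
  shows "WM_increment \<alpha> X n j \<in> borel_measurable M"
proof -
  have "X k m \<in> borel_measurable M" if "1 \<le> k" "1 \<le> m" for k m
    using assms(1) that unfolding triangular_array_def has_stable_law_def by blast
  then show ?thesis
    unfolding WM_increment_def[abs_def] using scale_block_pos[OF assms(2)] assms(3)
    by (intro borel_measurable_times borel_measurable_const borel_measurable_sum borel_measurable_diff)
       (auto simp: Suc_le_eq)
qed

lemma measurable_WM_functional:
  assumes "triangular_array M X \<alpha>" and "0 < \<alpha>" and f: "bdd_J1_continuous f"
  shows "(\<lambda>\<omega>. f (WM \<alpha> X n \<omega>)) \<in> borel_measurable M"
  unfolding bdd_J1_continuous_WM_eq[OF f]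
  by (intro measurable_step_path_functional_comp[OF f] WM_increment_measurable[OF assms(1,2)]) simp

definition increment_support :: "real \<Rightarrow> nat \<Rightarrow> nat \<Rightarrow> (nat \<times> nat) set" where
  "increment_support \<alpha> n j = (\<lambda>k. (k, j)) ` scale_block \<alpha> n \<union> (\<lambda>k. (k, j + 4 ^ (k^2))) ` scale_block \<alpha> n"

definition increment_weight :: "real \<Rightarrow> nat \<Rightarrow> nat \<Rightarrow> nat \<times> nat \<Rightarrow> real" where
  "increment_weight \<alpha> n j p = (if snd p = j then real n powr (- 1 / \<alpha>) else - (real n powr (- 1 / \<alpha>)))"

lemma increment_support_images_disjoint:
  "(\<lambda>k. (k, j)) ` K \<inter> (\<lambda>k::nat. (k, j + 4 ^ (k^2))) ` K = {}" for j :: nat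
  by auto

lemma WM_increment_eq_weighted_sum:
  "WM_increment \<alpha> X n j \<omega> =
     (\<Sum>p\<in>increment_support \<alpha> n j. increment_weight \<alpha> n j p * (\<lambda>(k, m). X k m) p \<omega>)"
proof -
  let ?K = "scale_block \<alpha> n" and ?w = "increment_weight \<alpha> n j"
  have "(\<Sum>p\<in>increment_support \<alpha> n j. ?w p * (\<lambda>(k, m). X k m) p \<omega>)
      = (\<Sum>p\<in>(\<lambda>k. (k, j)) ` ?K. ?w p * (\<lambda>(k, m). X k m) p \<omega>)
        + (\<Sum>p\<in>(\<lambda>k. (k, j + 4 ^ (k^2))) ` ?K. ?w p * (\<lambda>(k, m). X k m) p \<omega>)"
    unfolding increment_support_def
    by (rule sum.union_disjoint) (simp_all add: finite_scale_block increment_support_images_disjoint)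
  also have "\<dots> = (\<Sum>k\<in>?K. real n powr (- 1 / \<alpha>) * X k j \<omega>)
      + (\<Sum>k\<in>?K. - (real n powr (- 1 / \<alpha>)) * X k (j + 4 ^ (k^2)) \<omega>)"
    by (simp add: sum.reindex inj_on_def increment_weight_def)
  finally show ?thesis
    unfolding WM_increment_def by (simp add: sum_distrib_left sum_subtractf algebra_simps sum_negf)
qed

lemma WM_increments_indep:
  assumes tri: "triangular_array M X \<alpha>" and "0 < \<alpha>"
    and shift: "\<And>k. k \<in> scale_block \<alpha> n \<Longrightarrow> n \<le> 4 ^ (k^2)"
  shows "prob_space.indep_vars M (\<lambda>_. borel) (WM_increment \<alpha> X n) {1..n}"
proof -
  interpret prob_space M using tri unfolding triangular_array_def by simp
  have ind: "indep_vars (\<lambda>_. borel) (\<lambda>(k, m). X k m) {(k, m). 1 \<le> k \<and> 1 \<le> m}"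
    using tri unfolding triangular_array_def by simp
  have "increment_support \<alpha> n j \<subseteq> {(k, m). 1 \<le> k \<and> 1 \<le> m}" if "j \<in> {1..n}" for j
    using scale_block_pos[OF \<open>0 < \<alpha>\<close>] that unfolding increment_support_def by (auto simp: Suc_le_eq)
  moreover have "disjoint_family_on (increment_support \<alpha> n) {1..n}"
    unfolding disjoint_family_on_def increment_support_def
    by (fastforce dest: shift)
  ultimately have "indep_vars (\<lambda>_. borel)
      (\<lambda>j \<omega>. \<Sum>p\<in>increment_support \<alpha> n j. increment_weight \<alpha> n j p * (\<lambda>(k, m). X k m) p \<omega>) {1..n}"
    by (rule indep_vars_weighted_sums[OF ind])
  then show ?thesis by (simp add: WM_increment_eq_weighted_sum[abs_def])
qed

lemma WM_increment_char:
  assumes tri: "triangular_array M X \<alpha>" and "0 < \<alpha>" "1 \<le> n" "1 \<le> j"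
  shows "char (distr M borel (WM_increment \<alpha> X n j)) \<theta>
    = exp (- complex_of_real (block_weight \<alpha> n * \<bar>\<theta>\<bar> powr \<alpha> / real n))"
proof -
  interpret prob_space M using tri unfolding triangular_array_def by simp
  let ?K = "scale_block \<alpha> n" and ?w = "increment_weight \<alpha> n j" and ?Z = "\<lambda>(k, m). X k m"
  define c where "c = real n powr (- 1 / \<alpha>)"
  define cf where "cf k = stable_cf \<alpha> (real k powr (- 1 / \<alpha>)) 1 0" for k :: nat
  have char_Z: "char (distr M borel (?Z p)) = cf (fst p)" if "p \<in> increment_support \<alpha> n j" for p
    using tri that scale_block_pos[OF \<open>0 < \<alpha>\<close>] \<open>1 \<le> j\<close>
    unfolding triangular_array_def has_stable_law_def increment_support_def cf_def
    by (auto simp: Suc_le_eq)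
  have "indep_vars (\<lambda>_. borel) ?Z (increment_support \<alpha> n j)"
    using tri scale_block_pos[OF \<open>0 < \<alpha>\<close>] \<open>1 \<le> j\<close> unfolding triangular_array_def
    by (elim conjE indep_vars_subset) (auto simp: increment_support_def Suc_le_eq)
  then have "char (distr M borel (WM_increment \<alpha> X n j)) \<theta>
      = (\<Prod>p\<in>increment_support \<alpha> n j. cf (fst p) (?w p * \<theta>))"
    unfolding WM_increment_eq_weighted_sum[abs_def]
    by (subst char_distr_weighted_sum) (simp_all add: char_Z)
  also have "\<dots> = (\<Prod>k\<in>?K. cf k (c * \<theta>)) * (\<Prod>k\<in>?K. cf k (- (c * \<theta>)))"
    unfolding increment_support_def
    by (subst prod.union_disjoint)
       (simp_all add: finite_scale_block increment_support_images_disjoint prod.reindex inj_on_def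
         increment_weight_def c_def)
  also have "\<dots> = (\<Prod>k\<in>?K. exp (- complex_of_real (2 / real k * (\<bar>\<theta>\<bar> powr \<alpha> / real n))))"
    unfolding prod.distrib[symmetric] cf_def c_def
    using scale_block_pos[OF \<open>0 < \<alpha>\<close>] \<open>1 \<le> n\<close>
    by (intro prod.cong refl stable_cf_symmetrized_scaled \<open>0 < \<alpha>\<close>) auto
  also have "\<dots> = exp (- complex_of_real (block_weight \<alpha> n * \<bar>\<theta>\<bar> powr \<alpha> / real n))"
    unfolding block_weight_def
    by (simp add: exp_sum[OF finite_scale_block, symmetric] sum_negf sum_divide_distrib sum_distrib_right)
  finally show ?thesis .
qed


section \<open>The grid increments of the Levy motion\<close>

definition grid_scale :: "real \<Rightarrow> nat \<Rightarrow> real" where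
  "grid_scale \<alpha> n = (block_weight \<alpha> n / (2 * ln 2)) powr (1 / \<alpha>)"

definition levy_grid_increment :: "real \<Rightarrow> ('b \<Rightarrow> real \<Rightarrow> real) \<Rightarrow> nat \<Rightarrow> nat \<Rightarrow> 'b \<Rightarrow> real" where
  "levy_grid_increment \<alpha> W n j \<omega> = grid_scale \<alpha> n * (W \<omega> (real j / real n) - W \<omega> (real (j - 1) / real n))"

lemma grid_scale_tendsto:
  assumes "0 < \<alpha>"
  shows "grid_scale \<alpha> \<longlonglongrightarrow> 1"
proof -
  have "(\<lambda>n. (block_weight \<alpha> n / (2 * ln 2)) powr (1 / \<alpha>)) \<longlonglongrightarrow> (2 * ln 2 / (2 * ln 2)) powr (1 / \<alpha>)"
    using ln_gt_zero[of "2::real"] by (intro tendsto_intros block_weight_tendsto assms) auto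
  then show ?thesis unfolding grid_scale_def[abs_def] by simp
qed

lemma step_path_levy_grid_increment:
  assumes "W \<omega> 0 = 0"
  shows "step_path n (\<lambda>j. levy_grid_increment \<alpha> W n j \<omega>)
    = (\<lambda>t. grid_scale \<alpha> n * W \<omega> (real (min n (nat \<lfloor>real n * t\<rfloor>)) / real n))"
  using step_path_telescope[of n "grid_scale \<alpha> n" "\<lambda>j. W \<omega> (real j / real n)"] assms
  unfolding levy_grid_increment_def by (simp add: fun_eq_iff)

lemma levy_grid_increment_measurable:
  assumes "levy_motion N W \<alpha> \<sigma> \<beta>" and "j \<in> {1..n}"
  shows "levy_grid_increment \<alpha> W n j \<in> borel_measurable N"
proof -
  have "(\<lambda>\<omega>. W \<omega> t) \<in> borel_measurable N" if "t \<in> {0..1}" for t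
    using assms(1) that unfolding levy_motion_def by blast
  moreover have "real j / real n \<in> {0..1}" "real (j - 1) / real n \<in> {0..1}"
    using assms(2) by (auto simp: divide_simps)
  ultimately show ?thesis
    unfolding levy_grid_increment_def[abs_def]
    by (intro borel_measurable_times borel_measurable_const borel_measurable_diff)
qed

lemma levy_grid_increments_indep:
  assumes lev: "levy_motion N W \<alpha> \<sigma> \<beta>" and "1 \<le> n"
  shows "prob_space.indep_vars N (\<lambda>_. borel) (levy_grid_increment \<alpha> W n) {1..n}"
proof -
  interpret prob_space N using lev unfolding levy_motion_def by simp
  define ts where "ts i = real i / real n" for i
  have "strict_mono_on {0..n} ts"
    unfolding ts_def using \<open>1 \<le> n\<close> by (auto simp: strict_mono_on_def divide_strict_right_mono)
  moreover have "0 \<le> ts 0" "ts n \<le> 1" unfolding ts_def using \<open>1 \<le> n\<close> by auto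
  ultimately have "indep_vars (\<lambda>_. borel) (\<lambda>i \<omega>. W \<omega> (ts i) - W \<omega> (ts (i - 1))) {1..n}"
    using lev unfolding levy_motion_def by blast
  then have "indep_vars (\<lambda>_. borel) (\<lambda>i \<omega>. grid_scale \<alpha> n * (W \<omega> (ts i) - W \<omega> (ts (i - 1)))) {1..n}"
    by (rule indep_vars_compose2[where Y = "\<lambda>i x. grid_scale \<alpha> n * x"]) simp
  then show ?thesis unfolding levy_grid_increment_def[abs_def] ts_def by simp
qed

lemma levy_grid_increment_char:
  assumes lev: "levy_motion N W \<alpha> ((2 * ln 2) powr (1 / \<alpha>)) 0" and "0 < \<alpha>" and "j \<in> {1..n}"
  shows "char (distr N borel (levy_grid_increment \<alpha> W n j)) \<theta>
    = exp (- complex_of_real (block_weight \<alpha> n * \<bar>\<theta>\<bar> powr \<alpha> / real n))"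
proof -
  interpret prob_space N using lev unfolding levy_motion_def by simp
  define s where "s = real (j - 1) / real n"
  define t where "t = real j / real n"
  have "0 \<le> s" "s < t" "t \<le> 1" "t - s = 1 / real n"
    unfolding s_def t_def using assms(3) by (auto simp: divide_simps of_nat_diff)
  define D where "D \<omega> = W \<omega> t - W \<omega> s" for \<omega>
  have law: "has_stable_law N D \<alpha> ((2 * ln 2) powr (1 / \<alpha>) * (t - s) powr (1 / \<alpha>)) 0 0"
    using lev \<open>0 \<le> s\<close> \<open>s < t\<close> \<open>t \<le> 1\<close> unfolding levy_motion_def D_def by blast
  have scale: "((2 * ln 2) powr (1 / \<alpha>) * (t - s) powr (1 / \<alpha>)) powr \<alpha> = 2 * ln 2 / real n"
    using \<open>0 < \<alpha>\<close> \<open>t - s = 1 / real n\<close> \<open>s < t\<close> by (simp add: powr_mult[symmetric] powr_powr)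
  have "\<bar>grid_scale \<alpha> n * \<theta>\<bar> powr \<alpha> = block_weight \<alpha> n / (2 * ln 2) * \<bar>\<theta>\<bar> powr \<alpha>"
    unfolding grid_scale_def using \<open>0 < \<alpha>\<close> block_weight_nonneg
    by (simp add: abs_mult powr_mult powr_powr)
  moreover have "levy_grid_increment \<alpha> W n j = (\<lambda>\<omega>. grid_scale \<alpha> n * D \<omega>)"
    unfolding levy_grid_increment_def[abs_def] D_def s_def t_def by simp
  moreover have "D \<in> borel_measurable N" using law unfolding has_stable_law_def by simp
  ultimately show ?thesis
    using law \<open>0 < \<alpha>\<close> unfolding has_stable_law_def
    by (simp add: char_distr_scale stable_cf_symmetric scale)
qed


section \<open>Convergence in distribution\<close>

lemma integral_indep_vars_eq:
  fixes g :: "('i \<Rightarrow> real) \<Rightarrow> real"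
  assumes "prob_space M" "prob_space N" "I \<noteq> {}"
    and indY: "prob_space.indep_vars M (\<lambda>_. borel) Y I" and indV: "prob_space.indep_vars N (\<lambda>_. borel) V I"
    and marg: "\<And>i. i \<in> I \<Longrightarrow> distr M borel (Y i) = distr N borel (V i)"
    and g: "g \<in> borel_measurable (Pi\<^sub>M I (\<lambda>_. borel))"
  shows "(\<integral>\<omega>. g (\<lambda>i\<in>I. Y i \<omega>) \<partial>M) = (\<integral>\<omega>. g (\<lambda>i\<in>I. V i \<omega>) \<partial>N)"
proof -
  interpret M: prob_space M by fact
  interpret N: prob_space N by fact
  have Y: "\<And>i. i \<in> I \<Longrightarrow> Y i \<in> borel_measurable M" and V: "\<And>i. i \<in> I \<Longrightarrow> V i \<in> borel_measurable N"
    using indY indV unfolding M.indep_vars_def N.indep_vars_def by auto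
  have "(\<lambda>\<omega>. \<lambda>i\<in>I. Y i \<omega>) \<in> measurable M (Pi\<^sub>M I (\<lambda>_. borel))"
    and "(\<lambda>\<omega>. \<lambda>i\<in>I. V i \<omega>) \<in> measurable N (Pi\<^sub>M I (\<lambda>_. borel))"
    using Y V by (auto intro: measurable_restrict)
  note distr_Y = integral_distr[OF this(1) g] and distr_V = integral_distr[OF this(2) g]
  have "(\<integral>\<omega>. g (\<lambda>i\<in>I. Y i \<omega>) \<partial>M) = integral\<^sup>L (distr M (Pi\<^sub>M I (\<lambda>_. borel)) (\<lambda>\<omega>. \<lambda>i\<in>I. Y i \<omega>)) g"
    by (rule distr_Y[symmetric])
  also have "distr M (Pi\<^sub>M I (\<lambda>_. borel)) (\<lambda>\<omega>. \<lambda>i\<in>I. Y i \<omega>) = Pi\<^sub>M I (\<lambda>i. distr M borel (Y i))"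
    by (rule M.indep_vars_iff_distr_eq_PiM'[THEN iffD1, OF \<open>I \<noteq> {}\<close> Y indY])
  also have "\<dots> = Pi\<^sub>M I (\<lambda>i. distr N borel (V i))" using marg by (rule PiM_cong[OF refl])
  also have "\<dots> = distr N (Pi\<^sub>M I (\<lambda>_. borel)) (\<lambda>\<omega>. \<lambda>i\<in>I. V i \<omega>)"
    by (rule N.indep_vars_iff_distr_eq_PiM'[THEN iffD1, OF \<open>I \<noteq> {}\<close> V indV, symmetric])
  also have "integral\<^sup>L \<dots> g = (\<integral>\<omega>. g (\<lambda>i\<in>I. V i \<omega>) \<partial>N)"
    by (rule distr_V)
  finally show ?thesis .
qed

lemma integral_WM_eq_levy_step_path:
  assumes tri: "triangular_array M X \<alpha>" and lev: "levy_motion N W \<alpha> ((2 * ln 2) powr (1 / \<alpha>)) 0"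
    and "0 < \<alpha>" "\<alpha> < 2" "256 \<le> n" and f: "bdd_J1_continuous f"
  shows "(\<integral>\<omega>. f (WM \<alpha> X n \<omega>) \<partial>M) = (\<integral>\<omega>. f (step_path n (\<lambda>j. levy_grid_increment \<alpha> W n j \<omega>)) \<partial>N)"
proof -
  have "1 \<le> n" using \<open>256 \<le> n\<close> by simp
  have restrict: "step_path n (\<lambda>j. Y j \<omega>) = step_path n (\<lambda>j\<in>{1..n}. Y j \<omega>)" for Y :: "nat \<Rightarrow> _ \<Rightarrow> real" and \<omega>
    by (rule step_path_cong) simp
  have "distr M borel (WM_increment \<alpha> X n j) = distr N borel (levy_grid_increment \<alpha> W n j)"
    if "j \<in> {1..n}" for j
  proof (rule Levy_uniqueness)
    show "real_distribution (distr M borel (WM_increment \<alpha> X n j))"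
      using tri WM_increment_measurable[OF tri \<open>0 < \<alpha>\<close>] that
      by (intro prob_space.real_distribution_distr) (auto simp: triangular_array_def)
    show "real_distribution (distr N borel (levy_grid_increment \<alpha> W n j))"
      using lev levy_grid_increment_measurable[OF lev that]
      by (intro prob_space.real_distribution_distr) (auto simp: levy_motion_def)
    show "char (distr M borel (WM_increment \<alpha> X n j)) = char (distr N borel (levy_grid_increment \<alpha> W n j))"
      using WM_increment_char[OF tri \<open>0 < \<alpha>\<close> \<open>1 \<le> n\<close>] levy_grid_increment_char[OF lev \<open>0 < \<alpha>\<close> that] that
      by auto
  qed
  then have "(\<integral>\<omega>. f (step_path n (\<lambda>j\<in>{1..n}. WM_increment \<alpha> X n j \<omega>)) \<partial>M)
      = (\<integral>\<omega>. f (step_path n (\<lambda>j\<in>{1..n}. levy_grid_increment \<alpha> W n j \<omega>)) \<partial>N)"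
    using tri lev \<open>1 \<le> n\<close> unfolding triangular_array_def levy_motion_def
    by (intro integral_indep_vars_eq borel_measurable_step_path_functional[OF f]
        WM_increments_indep[OF tri \<open>0 < \<alpha>\<close>] scale_block_shift_ge[OF \<open>\<alpha> < 2\<close> \<open>256 \<le> n\<close>]
        levy_grid_increments_indep[OF lev]) auto
  then show ?thesis by (simp only: bdd_J1_continuous_WM_eq[OF f] restrict)
qed

text \<open>Once each \<open>Z n\<close> has a copy \<open>V n\<close> in law on the probability space of \<open>W\<close>, pathwise J1
  convergence of \<open>V n\<close> to \<open>W\<close> suffices, by dominated convergence.\<close>

lemma converges_in_dist_J1_coupling:
  assumes "prob_space N"
    and W: "\<And>\<omega>. \<omega> \<in> space N \<Longrightarrow> cadlag01 (W \<omega>)" and V: "\<And>n \<omega>. cadlag01 (V n \<omega>)"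
    and conv: "\<And>\<omega> d. \<omega> \<in> space N \<Longrightarrow> 0 < d \<Longrightarrow> eventually (\<lambda>n. skorokhod_J1 (W \<omega>) (V n \<omega>) < d) sequentially"
    and Z_meas: "\<And>f n. bdd_J1_continuous f \<Longrightarrow> (\<lambda>\<omega>. f (Z n \<omega>)) \<in> borel_measurable M"
    and V_meas: "\<And>f n. bdd_J1_continuous f \<Longrightarrow> (\<lambda>\<omega>. f (V n \<omega>)) \<in> borel_measurable N"
    and law: "\<And>f. bdd_J1_continuous f \<Longrightarrow> eventually (\<lambda>n. (\<integral>\<omega>. f (Z n \<omega>) \<partial>M) = (\<integral>\<omega>. f (V n \<omega>) \<partial>N)) sequentially"
  shows "converges_in_dist_J1 M Z N W"
  unfolding converges_in_dist_J1_def
proof (intro allI impI conjI)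
  interpret prob_space N by fact
  fix f assume f: "bdd_J1_continuous f"
  obtain B where B: "\<And>x. cadlag01 x \<Longrightarrow> \<bar>f x\<bar> \<le> B" using f unfolding bdd_J1_continuous_def by blast
  have lim: "(\<lambda>n. f (V n \<omega>)) \<longlonglongrightarrow> f (W \<omega>)" if "\<omega> \<in> space N" for \<omega>
    using f W[OF that] V conv[OF that] by (rule bdd_J1_continuous_tendsto)
  show "(\<lambda>\<omega>. f (Z n \<omega>)) \<in> borel_measurable M" for n using f by (rule Z_meas)
  show W_meas: "(\<lambda>\<omega>. f (W \<omega>)) \<in> borel_measurable N"
    using lim V_meas[OF f] by (rule borel_measurable_LIMSEQ_real)
  have "(\<lambda>n. \<integral>\<omega>. f (V n \<omega>) \<partial>N) \<longlonglongrightarrow> (\<integral>\<omega>. f (W \<omega>) \<partial>N)"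
    by (rule integral_dominated_convergence[where w = "\<lambda>_. B"])
       (use V_meas[OF f] W_meas lim B V in \<open>auto intro: AE_I2\<close>)
  then show "(\<lambda>n. \<integral>\<omega>. f (Z n \<omega>) \<partial>M) \<longlonglongrightarrow> (\<integral>\<omega>. f (W \<omega>) \<partial>N)"
    using law[OF f] by (simp add: tendsto_cong)
qed

theorem lemma4p6:
  fixes M :: "'a measure" and X :: "nat \<Rightarrow> nat \<Rightarrow> 'a \<Rightarrow> real" and \<alpha> :: real
    and N :: "'b measure" and W :: "'b \<Rightarrow> real \<Rightarrow> real"
  assumes "1 \<le> \<alpha>" and "\<alpha> < 2"
    and "triangular_array M X \<alpha>"
    and "levy_motion N W \<alpha> ((2 * ln 2) powr (1 / \<alpha>)) 0"
  shows "converges_in_dist_J1 M (WM \<alpha> X) N W"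
proof -
  note tri = assms(3) and lev = assms(4)
  have "0 < \<alpha>" using assms(1) by simp
  have W: "cadlag01 (W \<omega>)" "W \<omega> 0 = 0" if "\<omega> \<in> space N" for \<omega>
    using lev that unfolding levy_motion_def by auto
  define V where "V n \<omega> = step_path n (\<lambda>j. levy_grid_increment \<alpha> W n j \<omega>)" for n \<omega>
  show ?thesis
  proof (rule converges_in_dist_J1_coupling[where V = V])
    show "prob_space N" using lev unfolding levy_motion_def by simp
    show "eventually (\<lambda>n. skorokhod_J1 (W \<omega>) (V n \<omega>) < d) sequentially" if "\<omega> \<in> space N" "0 < d" for \<omega> d
      using skorokhod_J1_discretization_tendsto[OF W(1) grid_scale_tendsto] that \<open>0 < \<alpha>\<close>
      by (simp add: V_def step_path_levy_grid_increment W(2))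
    show "(\<lambda>\<omega>. f (V n \<omega>)) \<in> borel_measurable N" if "bdd_J1_continuous f" for f n
      unfolding V_def by (intro measurable_step_path_functional_comp[OF that] levy_grid_increment_measurable[OF lev])
    show "eventually (\<lambda>n. (\<integral>\<omega>. f (WM \<alpha> X n \<omega>) \<partial>M) = (\<integral>\<omega>. f (V n \<omega>) \<partial>N)) sequentially"
      if "bdd_J1_continuous f" for f
      using eventually_ge_at_top[of 256] unfolding V_def
      by eventually_elim (rule integral_WM_eq_levy_step_path[OF tri lev \<open>0 < \<alpha>\<close> \<open>\<alpha> < 2\<close> _ that])
  qed (use W cadlag01_step_path measurable_WM_functional[OF tri \<open>0 < \<alpha>\<close>] in \<open>auto simp: V_def\<close>)
qed

end
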